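(* Let $\Sigma$ be the system $x(t+1)=Ax(t)+Bu(t)+Gw(t)$, $y(t)=Cx(t)+\nu(t)$ as in the context, with $x\in\mathbb R^n$, and let $R\in\mathbb R^{r\times n}$ satisfy $\mathrm{im}(\mathcal{R}each(A,G))\cap\ker(R)=\{0\}$. Then for every $t\in\mathbb N$, every initial state $x^0\in\mathbb R^n$, every input sequence $\mathbf u$ and every measurable set $\overline X\subseteq\mathrm{supp}(\mathbf x|_{x^0,\mathbf u}(t))$, $$\mathbf P(R\,\mathbf x|_{x^0,\mathbf u}(t)\in R\overline X\mid x^0)=\mathbf P(\mathbf x|_{x^0,\mathbf u}(t)\in\overline X\mid x^0).$$
   Context: $\Sigma$: $x(t+1)=Ax(t)+Bu(t)+Gw(t)$, $y(t)=Cx(t)+\nu(t)$, $t\in\mathbb N$, $x\in\mathbb R^n$, $u\in\mathbb R^m$, $w\in\mathbb R^l$, $y,\nu\in\mathbb R^p$, where $(w(t))_t$ is i.i.d. $\mathcal N(\mu,I_l)$, $(\nu(t))_t$ is i.i.d. $\mathcal N(0,\Psi)$, mutually independent. For a deterministic initial state $x^0$ and deterministic input $\mathbf u:\mathbb N\to\mathbb R^m$, $\mathbf x|_{x^0,\mathbf u}(t)=A^tx^0+\sum_{\tau=0}^{t-1}A^{t-1-\tau}(Bu(\tau)+Gw(\tau))$; $\mathbf P(\cdot\mid x^0)$ is probability for the process started at $x^0$. $\mathrm{supp}(v)=\{z:\mathbf P(v\in B_\rho(z))>0\ \forall\rho>0\}$. $\mathcal{R}each_t(A,G)=[G\ AG\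 \cdots\ A^{t-1}G]$ and $\mathcal{R}each(A,G)=\mathcal{R}each_n(A,G)$. $R\overline X=\{Rx:x\in\overline X\}$. *)

theory Defs
  imports "HOL-Probability.Probability"
begin

primrec matpow :: "real^'n^'n \<Rightarrow> nat \<Rightarrow> real^'n^'n" where
  "matpow A 0 = mat 1"
| "matpow A (Suc k) = A ** matpow A k"

text \<open>Image of the block matrix Reach_t(A,G) = [G AG ... A^(t-1)G]:
  the set of all products [G AG ... A^(t-1)G] (v_0; ...; v_(t-1)).\<close>
definition reach_im :: "nat \<Rightarrow> real^'n^'n \<Rightarrow> real^'l^'n \<Rightarrow> (real^'n) set" where
  "reach_im t A G = {\<Sum>k<t. (matpow A k ** G) *v v k | v. True}"

definition Reach_im :: "real^'n^'n \<Rightarrow> real^'l^'n \<Rightarrow> (real^'n) set" where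
  "Reach_im A G = reach_im CARD('n) A G"

definition mat_ker :: "real^'n^'r \<Rightarrow> (real^'n) set" where
  "mat_ker R = {x. R *v x = 0}"

definition gauss_id_density :: "real^'l \<Rightarrow> real^'l \<Rightarrow> real" where
  "gauss_id_density \<mu> v = (\<Prod>i\<in>UNIV. normal_density (\<mu> $ i) 1 (v $ i))"

definition state ::
  "real^'n^'n \<Rightarrow> real^'m^'n \<Rightarrow> real^'l^'n \<Rightarrow> real^'n \<Rightarrow> (nat \<Rightarrow> real^'m)
     \<Rightarrow> (nat \<Rightarrow> 'w \<Rightarrow> real^'l) \<Rightarrow> nat \<Rightarrow> 'w \<Rightarrow> real^'n" where
  "state A B G x0 u w t \<omega> =
     matpow A t *v x0 + (\<Sum>\<tau><t. matpow A (t - 1 - \<tau>) *v (B *v u \<tau> + G *v w \<tau> \<omega>))"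

definition supp :: "'w measure \<Rightarrow> ('w \<Rightarrow> 'a::metric_space) \<Rightarrow> 'a set" where
  "supp M X = {z. \<forall>\<rho>>0. measure M {\<omega>\<in>space M. X \<omega> \<in> ball z \<rho>} > 0}"

end

theory Submission
  imports Defs
begin

text \<open>The state is a deterministic vector plus the noise contribution
  \<open>\<Sum>\<tau><t. A^(t-1-\<tau>) G w(\<tau>)\<close>, which lies in the subspace \<open>im Reach_t(A,G)\<close>.
  Hence the state takes values in a closed affine subspace, so does its support, and the
  set \<open>X\<close> lies in that affine subspace too. Differences of points of the affine subspace
  lie in \<open>im Reach_t(A,G)\<close>, which is contained in \<open>im Reach(A,G)\<close> because
  \<open>im Reach_(k+1) = im G + A im Reach_k\<close> is an increasing chain that, by a dimension count,
  becomes stationary within \<open>n\<close> steps. On that subspace \<open>R\<close> is injective; therefore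
  \<open>R x \<in> R X\<close> and \<open>x \<in> X\<close> are the same event.\<close>

lemma reach_imI: "x = (\<Sum>i<k. (matpow A i ** G) *v v i) \<Longrightarrow> x \<in> reach_im k A G"
  unfolding reach_im_def by blast

lemma reach_imE:
  assumes "x \<in> reach_im k A G"
  obtains v where "x = (\<Sum>i<k. (matpow A i ** G) *v v i)"
  using assms unfolding reach_im_def by blast

lemma subspace_reach_im: "subspace (reach_im k A G)"
  unfolding subspace_def
proof (intro conjI ballI allI)
  show "0 \<in> reach_im k A G"
    by (rule reach_imI[where v = "\<lambda>_. 0"]) simp
next
  fix x y assume x: "x \<in> reach_im k A G" and y: "y \<in> reach_im k A G"
  obtain v where "x = (\<Sum>i<k. (matpow A i ** G) *v v i)" using x by (rule reach_imE)
  moreover obtain v' where "y = (\<Sum>i<k. (matpow A i ** G) *v v' i)" using y by (rule reach_imE)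
  ultimately show "x + y \<in> reach_im k A G"
    by (intro reach_imI[where v = "\<lambda>i. v i + v' i"])
      (simp add: matrix_vector_right_distrib sum.distrib)
next
  fix c :: real and x assume "x \<in> reach_im k A G"
  then obtain v where "x = (\<Sum>i<k. (matpow A i ** G) *v v i)" by (rule reach_imE)
  then show "c *\<^sub>R x \<in> reach_im k A G"
    by (intro reach_imI[where v = "\<lambda>i. c *\<^sub>R v i"])
      (simp add: matrix_vector_mult_scaleR scaleR_sum_right)
qed

lemma reach_im_column_block:
  assumes "j < k"
  shows "(matpow A j ** G) *v y \<in> reach_im k A G"
proof (rule reach_imI[where v = "\<lambda>i. if i = j then y else 0"])
  show "(matpow A j ** G) *v y = (\<Sum>i<k. (matpow A i ** G) *v (if i = j then y else 0))"
    using assms by (simp add: if_distrib[of "\<lambda>v. (_ ** G) *v v"] cong: if_cong)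
qed

lemma reach_im_Suc:
  "reach_im (Suc k) A G = {G *v a + A *v y | a y. y \<in> reach_im k A G}"
proof -
  have shift: "(\<Sum>i<Suc k. (matpow A i ** G) *v v i)
      = G *v v 0 + A *v (\<Sum>i<k. (matpow A i ** G) *v v (Suc i))" for v
    unfolding sum.lessThan_Suc_shift
    by (simp add: vec.sum matrix_mul_assoc matrix_vector_mul_assoc)
  show ?thesis
  proof (intro set_eqI iffI)
    fix x assume "x \<in> reach_im (Suc k) A G"
    then obtain v where "x = (\<Sum>i<Suc k. (matpow A i ** G) *v v i)" by (rule reach_imE)
    moreover have "(\<Sum>i<k. (matpow A i ** G) *v v (Suc i)) \<in> reach_im k A G"
      by (rule reach_imI[where v = "\<lambda>i. v (Suc i)"]) simp
    ultimately show "x \<in> {G *v a + A *v y | a y. y \<in> reach_im k A G}"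
      unfolding shift by blast
  next
    fix x assume "x \<in> {G *v a + A *v y | a y. y \<in> reach_im k A G}"
    then obtain a y where x: "x = G *v a + A *v y" and "y \<in> reach_im k A G" by blast
    from \<open>y \<in> reach_im k A G\<close> obtain v where "y = (\<Sum>i<k. (matpow A i ** G) *v v i)"
      by (rule reach_imE)
    with x show "x \<in> reach_im (Suc k) A G"
      by (intro reach_imI[where v = "case_nat a v"], unfold shift) simp
  qed
qed

lemma reach_im_subset_Suc: "reach_im k A G \<subseteq> reach_im (Suc k) A G"
proof (induction k)
  case 0
  have "reach_im 0 A G = {0}" unfolding reach_im_def by simp
  then show ?case using subspace_0[OF subspace_reach_im] by simp
next
  case (Suc k)
  then show ?case unfolding reach_im_Suc[of "Suc k"] reach_im_Suc[of k] by blast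
qed

lemma reach_im_mono: "k \<le> m \<Longrightarrow> reach_im k A G \<subseteq> reach_im m A G"
  by (induction m rule: dec_induct) (use reach_im_subset_Suc in blast)+

lemma reach_im_eq_if_stationary:
  assumes "reach_im k A G = reach_im (Suc k) A G" and "k \<le> m"
  shows "reach_im m A G = reach_im k A G"
  using assms(2)
proof (induction m rule: dec_induct)
  case base then show ?case by simp
next
  case (step m)
  then show ?case
    using assms(1) unfolding reach_im_Suc[of m] reach_im_Suc[of k] by simp
qed

lemma dim_reach_im_ge_if_strictly_increasing:
  assumes "\<And>k. k < m \<Longrightarrow> reach_im k A G \<noteq> reach_im (Suc k) A G"
  shows "m \<le> dim (reach_im m A G)"
  using assms
proof (induction m)
  case 0 then show ?case by simp
next
  case (Suc m)
  have "reach_im m A G \<subset> reach_im (Suc m) A G"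
    using reach_im_subset_Suc Suc.prems[of m] by blast
  then have "dim (reach_im m A G) < dim (reach_im (Suc m) A G)"
    by (metis dim_psubset subspace_reach_im span_eq_iff)
  with Suc show ?case by simp
qed

lemma reach_im_stationary_within_dimension:
  fixes A :: "real^'n^'n" and G :: "real^'l^'n"
  obtains k where "k \<le> CARD('n)" and "reach_im k A G = reach_im (Suc k) A G"
proof -
  have "Suc CARD('n) \<le> dim (reach_im (Suc CARD('n)) A G)"
    if "\<forall>k\<le>CARD('n). reach_im k A G \<noteq> reach_im (Suc k) A G"
    using that by (intro dim_reach_im_ge_if_strictly_increasing) simp
  with dim_subset_UNIV_cart[of "reach_im (Suc CARD('n)) A G"] that show ?thesis
    by fastforce
qed

lemma reach_im_subset_Reach_im:
  fixes A :: "real^'n^'n" and G :: "real^'l^'n"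
  shows "reach_im t A G \<subseteq> Reach_im A G"
proof (cases "t \<le> CARD('n)")
  case True
  then show ?thesis unfolding Reach_im_def by (rule reach_im_mono)
next
  case False
  obtain k where kn: "k \<le> CARD('n)" and k: "reach_im k A G = reach_im (Suc k) A G"
    by (rule reach_im_stationary_within_dimension)
  have "reach_im t A G = reach_im k A G"
    using False kn by (intro reach_im_eq_if_stationary[OF k]) simp
  moreover have "reach_im CARD('n) A G = reach_im k A G"
    using kn by (rule reach_im_eq_if_stationary[OF k])
  ultimately show ?thesis unfolding Reach_im_def by simp
qed

lemma supp_subset_closed:
  assumes "closed S" and "\<And>\<omega>. \<omega> \<in> space M \<Longrightarrow> X \<omega> \<in> S"
  shows "supp M X \<subseteq> S"
proof
  fix z assume z: "z \<in> supp M X"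
  have "\<exists>y\<in>S. dist y z < e" if "e > 0" for e
  proof -
    have "measure M {\<omega>\<in>space M. X \<omega> \<in> ball z e} > 0"
      using z \<open>e > 0\<close> unfolding supp_def by blast
    then obtain \<omega> where "\<omega> \<in> space M" and "X \<omega> \<in> ball z e"
      by (metis (no_types, lifting) Collect_empty_eq less_irrefl measure_empty)
    then show ?thesis using assms(2) by (auto simp: dist_commute)
  qed
  then show "z \<in> S" using assms(1) closure_approachable closure_closed by metis
qed

definition noise_free_state ::
  "real^'n^'n \<Rightarrow> real^'m^'n \<Rightarrow> real^'n \<Rightarrow> (nat \<Rightarrow> real^'m) \<Rightarrow> nat \<Rightarrow> real^'n" where
  "noise_free_state A B x0 u t = matpow A t *v x0 + (\<Sum>\<tau><t. matpow A (t - 1 - \<tau>) *v (B *v u \<tau>))"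

lemma state_eq_noise_free_plus_noise:
  "state A B G x0 u w t \<omega>
     = noise_free_state A B x0 u t + (\<Sum>\<tau><t. (matpow A (t - 1 - \<tau>) ** G) *v w \<tau> \<omega>)"
  unfolding state_def noise_free_state_def
  by (simp add: matrix_vector_right_distrib sum.distrib matrix_vector_mul_assoc)

lemma state_in_affine_reach_im:
  "state A B G x0 u w t \<omega> \<in> (+) (noise_free_state A B x0 u t) ` reach_im t A G"
proof -
  have "(\<Sum>\<tau><t. (matpow A (t - 1 - \<tau>) ** G) *v w \<tau> \<omega>) \<in> reach_im t A G"
    by (intro subspace_sum[OF subspace_reach_im] reach_im_column_block) auto
  then show ?thesis unfolding state_eq_noise_free_plus_noise by (rule imageI)
qed

lemma supp_state_subset_affine_reach_im:
  "supp M (state A B G x0 u w t) \<subseteq> (+) (noise_free_state A B x0 u t) ` reach_im t A G"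
  by (intro supp_subset_closed state_in_affine_reach_im)
    (simp add: closed_translation closed_subspace subspace_reach_im)

lemma matrix_inj_on_affine:
  assumes "subspace V" and "V \<inter> mat_ker R = {0}"
    and "x \<in> (+) c ` V" and "z \<in> (+) c ` V" and "R *v x = R *v z"
  shows "x = z"
proof -
  obtain v v' where "v \<in> V" "v' \<in> V" and "x = c + v" "z = c + v'"
    using assms(3,4) by blast
  then have "x - z \<in> V" using subspace_diff[OF assms(1)] by simp
  moreover have "x - z \<in> mat_ker R"
    using assms(5) unfolding mat_ker_def by (simp add: matrix_vector_mult_diff_distrib)
  ultimately show ?thesis using assms(2) by (metis IntI eq_iff_diff_eq_0 singletonD)
qed

theorem lemma3:
  fixes M :: "'w measure"
    and A :: "real^'n^'n" and B :: "real^'m^'n" and G :: "real^'l^'n"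
    and R :: "real^'n^'r"
    and \<mu> :: "real^'l"
    and w :: "nat \<Rightarrow> 'w \<Rightarrow> real^'l"
    and x0 :: "real^'n" and u :: "nat \<Rightarrow> real^'m"
    and t :: nat and X :: "(real^'n) set"
  assumes "prob_space M"
    and "\<And>\<tau>. distributed M lborel (w \<tau>) (\<lambda>v. ennreal (gauss_id_density \<mu> v))"
    and "prob_space.indep_vars M (\<lambda>_. borel) w UNIV"
    and "Reach_im A G \<inter> mat_ker R = {0}"
    and "X \<in> sets borel"
    and "X \<subseteq> supp M (state A B G x0 u w t)"
  shows "measure M {\<omega>\<in>space M. R *v state A B G x0 u w t \<omega> \<in> (\<lambda>z. R *v z) ` X}
       = measure M {\<omega>\<in>space M. state A B G x0 u w t \<omega> \<in> X}"
proof -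
  let ?x = "state A B G x0 u w t" and ?S = "(+) (noise_free_state A B x0 u t) ` reach_im t A G"
  have X: "X \<subseteq> ?S"
    using assms(6) supp_state_subset_affine_reach_im by blast
  have ker: "reach_im t A G \<inter> mat_ker R = {0}"
    using assms(4) reach_im_subset_Reach_im subspace_0[OF subspace_reach_im] by blast
  have "R *v ?x \<omega> \<in> (\<lambda>z. R *v z) ` X \<longleftrightarrow> ?x \<omega> \<in> X" for \<omega>
  proof
    assume "R *v ?x \<omega> \<in> (\<lambda>z. R *v z) ` X"
    then obtain z where "z \<in> X" and "R *v ?x \<omega> = R *v z" by blast
    moreover from \<open>z \<in> X\<close> X have "z \<in> ?S" by blast
    ultimately show "?x \<omega> \<in> X"
      using matrix_inj_on_affine[OF subspace_reach_im ker state_in_affine_reach_im] by metis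
  qed (rule imageI)
  then show ?thesis by simp
qed

end
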